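(* Let $X$ be a compact metric space, $T:X\to X$ continuous, and $\Phi=\{\phi_n\}$ a supadditive potential on $X$. Fix a positive integer $k$. Then for every subset $Z\subseteq X$, \[ P_Z(T,\Phi)\ge P_Z\big(T,\tfrac1k\phi_k\big). \]
   Context: $B_n(x,\epsilon)=\{y:d(T^ix,T^iy)<\epsilon,\ 0\le i\le n-1\}$. Supadditive potential: continuous $\phi_n$ with $\phi_{n+m}(x)\ge\phi_n(x)+\phi_m(T^nx)$. For $Z\subseteq X$, $\epsilon>0$, a cover of $Z$ is a countable family $\Gamma=\{B_{n_i}(x_i,\epsilon)\}$ covering $Z$, $n(\Gamma)=\min n_i$. $P_Z(T,\Phi)$: $M(Z,\Phi,s,N,\epsilon)=\inf_\Gamma\sum_i\exp(-sn_i+\phi_{n_i}(x_i))$ over covers with $n(\Gamma)\ge N$; $m(Z,\Phi,s,\epsilon)=\lim_NM$; $P_Z(T,\Phi,\epsilon)=\inf\{s:m(Z,\Phi,s,\epsilon)=0\}$; $P_Z(T,\Phi)=\liminf_{\epsilon\to0}P_Z(T,\Phi,\epsilon)$. For a continuous function $\psi$, $P_Z(T,\psi)$ is defined with the sequence $g_n=\sum_{i=0}^{n-1}\psi\circ T^i$ and supremum over balls: $M(Z,\psi,s,N,\epsilon)=\inf_\Gamma\sum_i\exp(-sn_i+\sup_{y\in B_{n_i}(x_i,\epsilon)}g_{n_i}(y))$ over covers with $n(\Gamma)\ge N$, $m(Z,\psi,s,\epsilon)=\lim_NM$, $P_Z(T,\psi,\epsilon)=\inf\{s:m(Z,\psi,s,\epsilon)=0\}$,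 $P_Z(T,\psi)=\liminf_{\epsilon\to0}P_Z(T,\psi,\epsilon)$. *)

theory Defs
  imports "HOL-Analysis.Analysis"
begin

definition bowen_ball :: "'a::metric_space set \<Rightarrow> ('a \<Rightarrow> 'a) \<Rightarrow> nat \<Rightarrow> 'a \<Rightarrow> real \<Rightarrow> 'a set" where
  "bowen_ball X T n x eps = {y \<in> X. \<forall>i<n. dist ((T ^^ i) x) ((T ^^ i) y) < eps}"

definition supadditive_potential :: "'a::metric_space set \<Rightarrow> ('a \<Rightarrow> 'a) \<Rightarrow> (nat \<Rightarrow> 'a \<Rightarrow> real) \<Rightarrow> bool" where
  "supadditive_potential X T \<phi> \<longleftrightarrow>
     (\<forall>n. continuous_on X (\<phi> n)) \<and>
     (\<forall>n m x. n \<ge> 1 \<longrightarrow> m \<ge> 1 \<longrightarrow> x \<in> X \<longrightarrow> \<phi> (n + m) x \<ge> \<phi> n x + \<phi> m ((T ^^ n) x))"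

definition bowen_covers :: "'a::metric_space set \<Rightarrow> ('a \<Rightarrow> 'a) \<Rightarrow> 'a set \<Rightarrow> nat \<Rightarrow> real \<Rightarrow> ('a \<times> nat) set set" where
  "bowen_covers X T Z N eps = {G. countable G \<and> G \<subseteq> X \<times> {N..} \<and>
      Z \<subseteq> (\<Union>(x, n)\<in>G. bowen_ball X T n x eps)}"

definition M_seq :: "'a::metric_space set \<Rightarrow> ('a \<Rightarrow> 'a) \<Rightarrow> (nat \<Rightarrow> 'a \<Rightarrow> real) \<Rightarrow> 'a set \<Rightarrow> real \<Rightarrow> nat \<Rightarrow> real \<Rightarrow> ennreal" where
  "M_seq X T \<phi> Z s N eps = (INF G\<in>bowen_covers X T Z N eps.
      infsum (\<lambda>(x, n). ennreal (exp (- s * real n + \<phi> n x))) G)"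

definition m_seq :: "'a::metric_space set \<Rightarrow> ('a \<Rightarrow> 'a) \<Rightarrow> (nat \<Rightarrow> 'a \<Rightarrow> real) \<Rightarrow> 'a set \<Rightarrow> real \<Rightarrow> real \<Rightarrow> ennreal" where
  "m_seq X T \<phi> Z s eps = lim (\<lambda>N. M_seq X T \<phi> Z s N eps)"

definition pressure_seq_eps :: "'a::metric_space set \<Rightarrow> ('a \<Rightarrow> 'a) \<Rightarrow> (nat \<Rightarrow> 'a \<Rightarrow> real) \<Rightarrow> 'a set \<Rightarrow> real \<Rightarrow> ereal" where
  "pressure_seq_eps X T \<phi> Z eps = Inf (ereal ` {s. m_seq X T \<phi> Z s eps = 0})"

definition pressure_seq :: "'a::metric_space set \<Rightarrow> ('a \<Rightarrow> 'a) \<Rightarrow> (nat \<Rightarrow> 'a \<Rightarrow> real) \<Rightarrow> 'a set \<Rightarrow> ereal" where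
  "pressure_seq X T \<phi> Z = Liminf (at_right 0) (\<lambda>eps. pressure_seq_eps X T \<phi> Z eps)"

definition birkhoff_sum :: "('a \<Rightarrow> 'a) \<Rightarrow> ('a \<Rightarrow> real) \<Rightarrow> nat \<Rightarrow> 'a \<Rightarrow> real" where
  "birkhoff_sum T \<psi> n y = (\<Sum>i<n. \<psi> ((T ^^ i) y))"

definition M_fun :: "'a::metric_space set \<Rightarrow> ('a \<Rightarrow> 'a) \<Rightarrow> ('a \<Rightarrow> real) \<Rightarrow> 'a set \<Rightarrow> real \<Rightarrow> nat \<Rightarrow> real \<Rightarrow> ennreal" where
  "M_fun X T \<psi> Z s N eps = (INF G\<in>bowen_covers X T Z N eps.
      infsum (\<lambda>(x, n). ennreal (exp (- s * real n +
         (SUP y\<in>bowen_ball X T n x eps. birkhoff_sum T \<psi> n y)))) G)"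

definition m_fun :: "'a::metric_space set \<Rightarrow> ('a \<Rightarrow> 'a) \<Rightarrow> ('a \<Rightarrow> real) \<Rightarrow> 'a set \<Rightarrow> real \<Rightarrow> real \<Rightarrow> ennreal" where
  "m_fun X T \<psi> Z s eps = lim (\<lambda>N. M_fun X T \<psi> Z s N eps)"

definition pressure_fun_eps :: "'a::metric_space set \<Rightarrow> ('a \<Rightarrow> 'a) \<Rightarrow> ('a \<Rightarrow> real) \<Rightarrow> 'a set \<Rightarrow> real \<Rightarrow> ereal" where
  "pressure_fun_eps X T \<psi> Z eps = Inf (ereal ` {s. m_fun X T \<psi> Z s eps = 0})"

definition pressure_fun :: "'a::metric_space set \<Rightarrow> ('a \<Rightarrow> 'a) \<Rightarrow> ('a \<Rightarrow> real) \<Rightarrow> 'a set \<Rightarrow> ereal" where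
  "pressure_fun X T \<psi> Z = Liminf (at_right 0) (\<lambda>eps. pressure_fun_eps X T \<psi> Z eps)"

end

theory Submission
  imports Defs
begin

(* Fix B with |\<phi>_m| \<le> B on X for 1 \<le> m \<le> k (compactness). For n \<ge> k, supadditivity cuts the
   orbit segment of length n - k along each residue class mod k into consecutive k-blocks, so the
   sum of \<phi>_k over each class is at most \<phi>_n x + 2B; summing the k classes and the last k terms
   gives k S_n(\<phi>_k/k)(x) \<le> k (\<phi>_n x + 3B). Uniform continuity of \<phi>_k/k lets the supremum over a
   Bowen ball B_n(x, eps) exceed the value at x by at most n \<delta> once eps is small, so each cover
   contributes to M(Z, \<phi>_k/k, s + \<delta>) at most e^(3B) times its contribution to M(Z, \<Phi>, s).
   Hence P_Z(T, \<phi>_k/k, eps) \<le> P_Z(T, \<Phi>, eps) + \<delta> for all small eps. *)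

lemma funpow_closed: "T ` X \<subseteq> X \<Longrightarrow> x \<in> X \<Longrightarrow> (T ^^ i) x \<in> X"
  by (induction i) auto

lemma sum_lessThan_residue_classes:
  fixes f :: "nat \<Rightarrow> 'b::comm_monoid_add"
  assumes "0 < k"
  shows "(\<Sum>i<m. f i) = (\<Sum>j<k. \<Sum>t | j + t*k < m. f (j + t*k))"
proof -
  let ?S = "SIGMA j:{..<k}. {t. j + t*k < m}"
  have "t \<le> j + t*k" for j t
    using assms by (simp add: trans_le_add2)
  then have finite_class: "finite {t. j + t*k < m}" for j
    by (auto intro: finite_subset[of _ "{..<m}"] le_less_trans)
  have "bij_betw (\<lambda>(j, t). j + t*k) ?S {..<m}"
    by (rule bij_betw_byWitness[where f' = "\<lambda>i. (i mod k, i div k)"]) (use assms in auto)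
  then have "(\<Sum>i<m. f i) = (\<Sum>(j, t)\<in>?S. f (j + t*k))"
    by (subst sum.reindex_bij_betw[symmetric]) (auto simp: case_prod_unfold)
  also have "\<dots> = (\<Sum>j<k. \<Sum>t | j + t*k < m. f (j + t*k))"
    by (rule sum.Sigma[symmetric]) (auto simp: finite_class)
  finally show ?thesis .
qed

lemma residue_class_blocks:
  fixes j k n :: nat
  assumes "0 < k" "j < n"
  obtains q r where "n = j + q*k + r" "1 \<le> r" "r \<le> k" "{t. j + t*k + k < n} = {..<q}"
proof
  define q where "q = (n - j - 1) div k"
  define s where "s = (n - j - 1) mod k"
  show n_eq: "n = j + q*k + (s + 1)" unfolding q_def s_def using assms(2) by simp
  have "s < k" unfolding s_def using assms(1) by simp
  then show "s + 1 \<le> k" by simp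
  have "Suc t * k \<le> q*k + s \<longleftrightarrow> t < q" for t
  proof
    assume "Suc t * k \<le> q*k + s"
    also have "\<dots> < Suc q * k" using \<open>s < k\<close> by simp
    finally show "t < q" by simp
  next
    assume "t < q"
    then have "Suc t * k \<le> q*k" by (intro mult_le_mono1) simp
    then show "Suc t * k \<le> q*k + s" by simp
  qed
  moreover have "j + t*k + k < n \<longleftrightarrow> Suc t * k \<le> q*k + s" for t
    using n_eq by (simp add: less_Suc_eq_le add.commute)
  ultimately show "{t. j + t*k + k < n} = {..<q}" by auto
qed simp

lemma supadditive_potentialD:
  assumes "supadditive_potential X T \<phi>" "1 \<le> n" "1 \<le> m" "x \<in> X"
  shows "\<phi> n x + \<phi> m ((T ^^ n) x) \<le> \<phi> (n + m) x"
  using assms unfolding supadditive_potential_def by blast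

lemma supadditive_potential_blocks:
  assumes sp: "supadditive_potential X T \<phi>" and TX: "T ` X \<subseteq> X"
    and k: "1 \<le> k" and r: "1 \<le> r"
  shows "x \<in> X \<Longrightarrow>
    (\<Sum>t<q. \<phi> k ((T ^^ (t*k)) x)) + \<phi> r ((T ^^ (q*k)) x) \<le> \<phi> (q*k + r) x"
proof (induction q arbitrary: x)
  case 0
  then show ?case by simp
next
  case (Suc q)
  have shift: "(T ^^ (Suc t * k)) x = (T ^^ (t*k)) ((T ^^ k) x)" for t
    by (metis funpow_add comp_apply add.commute mult_Suc)
  have "(\<Sum>t<Suc q. \<phi> k ((T ^^ (t*k)) x)) + \<phi> r ((T ^^ (Suc q * k)) x)
      = \<phi> k x + ((\<Sum>t<q. \<phi> k ((T ^^ (t*k)) ((T ^^ k) x))) + \<phi> r ((T ^^ (q*k)) ((T ^^ k) x)))"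
    by (simp only: sum.lessThan_Suc_shift shift) simp
  also have "\<dots> \<le> \<phi> k x + \<phi> (q*k + r) ((T ^^ k) x)"
    using Suc.IH[OF funpow_closed[OF TX Suc.prems]] by simp
  also have "\<dots> \<le> \<phi> (k + (q*k + r)) x"
    by (rule supadditive_potentialD[OF sp k _ Suc.prems]) (use r in simp)
  finally show ?case by (simp add: add.assoc)
qed

lemma supadditive_potential_residue_class:
  assumes sp: "supadditive_potential X T \<phi>" and TX: "T ` X \<subseteq> X" and k: "1 \<le> k"
    and bound: "\<And>m y. 1 \<le> m \<Longrightarrow> m \<le> k \<Longrightarrow> y \<in> X \<Longrightarrow> \<bar>\<phi> m y\<bar> \<le> B"
    and x: "x \<in> X" and j: "j < k" and n: "k \<le> n"
  shows "(\<Sum>t | j + t*k + k < n. \<phi> k ((T ^^ (j + t*k)) x)) \<le> \<phi> n x + 2*B"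
proof -
  obtain q r where n_eq: "n = j + q*k + r" and r: "1 \<le> r" "r \<le> k"
    and blocks: "{t. j + t*k + k < n} = {..<q}"
    using residue_class_blocks[of k j n] j n by auto
  define y where "y = (T ^^ j) x"
  have y: "y \<in> X" unfolding y_def using funpow_closed[OF TX x] .
  have "(\<Sum>t | j + t*k + k < n. \<phi> k ((T ^^ (j + t*k)) x))
      = (\<Sum>t<q. \<phi> k ((T ^^ (t*k)) y))"
    unfolding blocks y_def by (metis funpow_add comp_apply add.commute)
  also have "\<dots> \<le> \<phi> (q*k + r) y - \<phi> r ((T ^^ (q*k)) y)"
    using supadditive_potential_blocks[OF sp TX k r(1) y, where q = q] by linarith
  also have "\<dots> \<le> \<phi> (q*k + r) y + B"
    using bound[OF r funpow_closed[OF TX y], of "q*k"] by simp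
  also have "\<dots> \<le> \<phi> n x + 2*B"
  proof (cases "j = 0")
    case True
    have "0 \<le> B" using bound[OF k order.refl x] by simp
    then show ?thesis using True n_eq unfolding y_def by simp
  next
    case False
    have "\<phi> j x + \<phi> (q*k + r) y \<le> \<phi> n x"
      using supadditive_potentialD[OF sp _ _ x, of j "q*k + r"] False r n_eq unfolding y_def
      by (simp add: add.assoc)
    moreover have "- B \<le> \<phi> j x" using bound[of j x] False j x by simp
    ultimately show ?thesis by simp
  qed
  finally show ?thesis .
qed

lemma birkhoff_sum_le_supadditive_potential:
  assumes sp: "supadditive_potential X T \<phi>" and TX: "T ` X \<subseteq> X" and k: "1 \<le> k"
    and bound: "\<And>m y. 1 \<le> m \<Longrightarrow> m \<le> k \<Longrightarrow> y \<in> X \<Longrightarrow> \<bar>\<phi> m y\<bar> \<le> B"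
    and x: "x \<in> X" and n: "k \<le> n"
  shows "birkhoff_sum T (\<lambda>y. \<phi> k y / real k) n x \<le> \<phi> n x + 3*B"
proof -
  define f where "f i = \<phi> k ((T ^^ i) x)" for i
  have "(\<Sum>i<n-k. f i) = (\<Sum>j<k. \<Sum>t | j + t*k + k < n. f (j + t*k))"
    using sum_lessThan_residue_classes[of k f "n - k"] k by (simp add: less_diff_conv)
  also have "\<dots> \<le> (\<Sum>j<k. \<phi> n x + 2*B)"
    unfolding f_def
    by (rule sum_mono) (use supadditive_potential_residue_class[OF sp TX k bound x _ n] in simp)
  finally have head: "(\<Sum>i<n-k. f i) \<le> k * (\<phi> n x + 2*B)" by simp
  have "(\<Sum>i\<in>{n-k..<n}. f i) \<le> card {n-k..<n} * B"
    using bound[OF k order.refl funpow_closed[OF TX x]]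
    by (intro sum_bounded_above) (simp add: f_def abs_le_iff)
  then have tail: "(\<Sum>i\<in>{n-k..<n}. f i) \<le> k * B" using n by simp
  have "(\<Sum>i<n. f i) = (\<Sum>i<n-k. f i) + (\<Sum>i\<in>{n-k..<n}. f i)"
    using sum.atLeastLessThan_concat[of 0 "n-k" n f] by (simp add: atLeast0LessThan)
  also have "\<dots> \<le> k * (\<phi> n x + 3*B)" using head tail by (simp add: algebra_simps)
  finally show ?thesis
    using k
    by (simp add: birkhoff_sum_def f_def sum_divide_distrib[symmetric] divide_le_eq mult.commute)
qed

lemma supadditive_potential_bounded:
  assumes "compact X" and "supadditive_potential X T \<phi>"
  obtains B where "\<And>m y. 1 \<le> m \<Longrightarrow> m \<le> k \<Longrightarrow> y \<in> X \<Longrightarrow> \<bar>\<phi> m y\<bar> \<le> B"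
proof -
  have "bounded (\<Union>m\<in>{1..k}. \<phi> m ` X)"
    using assms unfolding supadditive_potential_def
    by (auto intro!: bounded_UN compact_imp_bounded compact_continuous_image)
  then obtain B where "\<And>v. v \<in> (\<Union>m\<in>{1..k}. \<phi> m ` X) \<Longrightarrow> \<bar>v\<bar> \<le> B"
    unfolding bounded_real by blast
  then show ?thesis by (intro that[of B]) force
qed

lemma SUP_birkhoff_sum_bowen_ball_le:
  assumes eps: "0 < eps" and x: "x \<in> X" and TX: "T ` X \<subseteq> X"
    and close: "\<And>a b. a \<in> X \<Longrightarrow> b \<in> X \<Longrightarrow> dist a b < eps \<Longrightarrow> \<bar>\<psi> a - \<psi> b\<bar> \<le> \<delta>"
  shows "(SUP y\<in>bowen_ball X T n x eps. birkhoff_sum T \<psi> n y)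
    \<le> birkhoff_sum T \<psi> n x + real n * \<delta>"
proof (rule cSUP_least)
  show "bowen_ball X T n x eps \<noteq> {}" using x eps unfolding bowen_ball_def by auto
next
  fix y assume "y \<in> bowen_ball X T n x eps"
  then have y: "y \<in> X"
    and orbits_close: "\<And>i. i < n \<Longrightarrow> dist ((T ^^ i) y) ((T ^^ i) x) < eps"
    unfolding bowen_ball_def by (auto simp: dist_commute)
  have "\<psi> ((T ^^ i) y) \<le> \<psi> ((T ^^ i) x) + \<delta>" if "i < n" for i
    using close[OF funpow_closed[OF TX y] funpow_closed[OF TX x] orbits_close[OF that]] by simp
  then have "(\<Sum>i<n. \<psi> ((T ^^ i) y)) \<le> (\<Sum>i<n. \<psi> ((T ^^ i) x) + \<delta>)"
    by (intro sum_mono) simp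
  then show "birkhoff_sum T \<psi> n y \<le> birkhoff_sum T \<psi> n x + real n * \<delta>"
    unfolding birkhoff_sum_def by (simp add: sum.distrib)
qed

lemma infsum_cmult_ennreal:
  fixes f :: "'b \<Rightarrow> ennreal"
  assumes "c < top"
  shows "infsum (\<lambda>x. c * f x) A = c * infsum f A"
proof -
  have "(f has_sum infsum f A) A"
    by (rule has_sum_infsum, rule nonneg_summable_on_complete) simp
  then have "(sum f \<longlongrightarrow> infsum f A) (finite_subsets_at_top A)"
    unfolding has_sum_def .
  then have "((\<lambda>F. c * sum f F) \<longlongrightarrow> c * infsum f A) (finite_subsets_at_top A)"
    by (rule ennreal_tendsto_cmult[OF assms])
  then have "((\<lambda>x. c * f x) has_sum (c * infsum f A)) A"
    unfolding has_sum_def by (simp add: sum_distrib_left)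
  then show ?thesis by (rule infsumI)
qed

lemma INF_cmult_ennreal:
  fixes f :: "'b \<Rightarrow> ennreal"
  assumes "c \<noteq> 0" "c < top"
  shows "(INF x\<in>A. c * f x) = c * (INF x\<in>A. f x)"
proof (cases "A = {}")
  case True
  then show ?thesis using assms(1) by (simp add: ennreal_mult_top)
next
  case False
  have "continuous_on UNIV (\<lambda>y::ennreal. c * y)"
    using ennreal_continuous_on_cmult[OF assms(2) continuous_on_id] .
  then have "continuous (at_right (Inf (f ` A))) (\<lambda>y. c * y)"
    by (simp add: continuous_on_eq_continuous_at continuous_at_imp_continuous_within)
  moreover have "mono (\<lambda>y::ennreal. c * y)"
    by (rule monoI) (rule mult_left_mono, simp_all)
  ultimately have "c * Inf (f ` A) = Inf ((\<lambda>y. c * y) ` f ` A)"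
    using False by (intro continuous_at_Inf_mono) simp_all
  then show ?thesis by (simp add: image_image)
qed

lemma M_seq_mono: "N \<le> N' \<Longrightarrow> M_seq X T \<phi> Z s N eps \<le> M_seq X T \<phi> Z s N' eps"
  unfolding M_seq_def by (rule INF_superset_mono) (auto simp: bowen_covers_def)

lemma m_seq_eq_SUP: "m_seq X T \<phi> Z s eps = (SUP N. M_seq X T \<phi> Z s N eps)"
  unfolding m_seq_def by (intro limI LIMSEQ_SUP incseq_SucI M_seq_mono) simp

lemma M_fun_le_M_seq:
  assumes "\<And>x n. x \<in> X \<Longrightarrow> N \<le> n \<Longrightarrow>
      (SUP y\<in>bowen_ball X T n x eps. birkhoff_sum T \<psi> n y) \<le> \<phi> n x + real n * \<delta> + C"
  shows "M_fun X T \<psi> Z (s + \<delta>) N eps \<le> ennreal (exp C) * M_seq X T \<phi> Z s N eps"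
proof -
  let ?w = "\<lambda>(x, n). ennreal (exp (- s * real n + \<phi> n x))"
  let ?w' = "\<lambda>(x, n). ennreal (exp (- (s + \<delta>) * real n +
      (SUP y\<in>bowen_ball X T n x eps. birkhoff_sum T \<psi> n y)))"
  have "infsum ?w' G \<le> ennreal (exp C) * infsum ?w G"
    if G: "G \<in> bowen_covers X T Z N eps" for G
  proof -
    have "?w' p \<le> ennreal (exp C) * ?w p" if "p \<in> G" for p
    proof -
      obtain x n where p: "p = (x, n)" and "x \<in> X" "N \<le> n"
        using G \<open>p \<in> G\<close> unfolding bowen_covers_def by (cases p) auto
      then have "- (s + \<delta>) * n + (SUP y\<in>bowen_ball X T n x eps. birkhoff_sum T \<psi> n y)
          \<le> C + (- s * n + \<phi> n x)"
        using assms by (force simp: algebra_simps)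
      then show ?thesis
        unfolding p by (simp add: exp_add[symmetric] ennreal_mult[symmetric] ennreal_leI)
    qed
    then have "infsum ?w' G \<le> infsum (\<lambda>p. ennreal (exp C) * ?w p) G"
      by (intro infsum_mono nonneg_summable_on_complete) simp_all
    also have "\<dots> = ennreal (exp C) * infsum ?w G"
      by (rule infsum_cmult_ennreal) simp
    finally show ?thesis .
  qed
  then have "M_fun X T \<psi> Z (s + \<delta>) N eps
      \<le> (INF G\<in>bowen_covers X T Z N eps. ennreal (exp C) * infsum ?w G)"
    unfolding M_fun_def by (intro INF_mono) auto
  also have "\<dots> = ennreal (exp C) * M_seq X T \<phi> Z s N eps"
    unfolding M_seq_def by (rule INF_cmult_ennreal) simp_all
  finally show ?thesis .
qed

lemma m_fun_eq_0_if_m_seq_eq_0: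
  assumes "\<And>x n. x \<in> X \<Longrightarrow> N \<le> n \<Longrightarrow>
      (SUP y\<in>bowen_ball X T n x eps. birkhoff_sum T \<psi> n y) \<le> \<phi> n x + real n * \<delta> + C"
    and "m_seq X T \<phi> Z s eps = 0"
  shows "m_fun X T \<psi> Z (s + \<delta>) eps = 0"
proof -
  have M_seq_0: "M_seq X T \<phi> Z s N' eps = 0" for N'
    using assms(2) unfolding m_seq_eq_SUP by (metis SUP_upper UNIV_I le_zero_eq)
  then have "M_fun X T \<psi> Z (s + \<delta>) N' eps = 0" if "N \<le> N'" for N'
  proof -
    have "M_fun X T \<psi> Z (s + \<delta>) N' eps \<le> ennreal (exp C) * M_seq X T \<phi> Z s N' eps"
      by (rule M_fun_le_M_seq) (use assms(1) that in auto)
    then show ?thesis using M_seq_0 by simp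
  qed
  then have "(\<lambda>N'. M_fun X T \<psi> Z (s + \<delta>) N' eps) \<longlonglongrightarrow> 0"
    by (intro tendsto_eventually eventually_sequentiallyI)
  then show ?thesis unfolding m_fun_def by (rule limI)
qed

lemma Inf_ereal_image_le_shift:
  assumes "\<And>s. s \<in> A \<Longrightarrow> s + \<delta> \<in> B"
  shows "Inf (ereal ` B) \<le> Inf (ereal ` A) + ereal \<delta>"
proof -
  have "Inf (ereal ` B) - ereal \<delta> \<le> Inf (ereal ` A)"
  proof (rule Inf_greatest)
    fix y assume "y \<in> ereal ` A"
    then obtain s where "y = ereal s" "s \<in> A" by blast
    then have "Inf (ereal ` B) \<le> ereal (s + \<delta>)" using assms by (intro Inf_lower) auto
    then show "Inf (ereal ` B) - ereal \<delta> \<le> y"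
      unfolding \<open>y = ereal s\<close> by (cases "Inf (ereal ` B)") auto
  qed
  then show ?thesis by (cases "Inf (ereal ` B)"; cases "Inf (ereal ` A)") auto
qed

lemma pressure_fun_eps_le_pressure_seq_eps:
  assumes sp: "supadditive_potential X T \<phi>" and TX: "T ` X \<subseteq> X" and k: "1 \<le> k"
    and bound: "\<And>m y. 1 \<le> m \<Longrightarrow> m \<le> k \<Longrightarrow> y \<in> X \<Longrightarrow> \<bar>\<phi> m y\<bar> \<le> B"
    and eps: "0 < eps"
    and close: "\<And>a b. a \<in> X \<Longrightarrow> b \<in> X \<Longrightarrow> dist a b < eps \<Longrightarrow>
      \<bar>\<phi> k a / real k - \<phi> k b / real k\<bar> \<le> \<delta>"
  shows "pressure_fun_eps X T (\<lambda>x. \<phi> k x / real k) Z eps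
    \<le> pressure_seq_eps X T \<phi> Z eps + ereal \<delta>"
proof -
  have SUP_le: "(SUP y\<in>bowen_ball X T n x eps. birkhoff_sum T (\<lambda>x. \<phi> k x / real k) n y)
      \<le> \<phi> n x + real n * \<delta> + 3*B" if "x \<in> X" "k \<le> n" for x n
    using SUP_birkhoff_sum_bowen_ball_le[where \<psi> = "\<lambda>x. \<phi> k x / real k" and n = n,
        OF eps \<open>x \<in> X\<close> TX close]
      birkhoff_sum_le_supadditive_potential[OF sp TX k bound \<open>x \<in> X\<close> \<open>k \<le> n\<close>]
    by simp
  have "m_fun X T (\<lambda>x. \<phi> k x / real k) Z (s + \<delta>) eps = 0"
    if "m_seq X T \<phi> Z s eps = 0" for s
    by (rule m_fun_eq_0_if_m_seq_eq_0[OF SUP_le that])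
  then show ?thesis
    unfolding pressure_fun_eps_def pressure_seq_eps_def by (intro Inf_ereal_image_le_shift) simp
qed

theorem lemma4p1:
  fixes X :: "'a::metric_space set" and T :: "'a \<Rightarrow> 'a"
    and \<phi> :: "nat \<Rightarrow> 'a \<Rightarrow> real" and k :: nat and Z :: "'a set"
  assumes "compact X"
    and "continuous_on X T" and "T ` X \<subseteq> X"
    and "supadditive_potential X T \<phi>"
    and "k \<ge> 1"
    and "Z \<subseteq> X"
  shows "pressure_seq X T \<phi> Z \<ge> pressure_fun X T (\<lambda>x. \<phi> k x / real k) Z"
proof (rule ereal_le_epsilon2)
  fix \<delta> :: real assume "0 < \<delta>"
  obtain B where bound: "\<And>m y. 1 \<le> m \<Longrightarrow> m \<le> k \<Longrightarrow> y \<in> X \<Longrightarrow> \<bar>\<phi> m y\<bar> \<le> B"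
    using supadditive_potential_bounded[OF assms(1,4)] by blast
  have "uniformly_continuous_on X (\<lambda>x. \<phi> k x / real k)"
    using assms(1,4,5) unfolding supadditive_potential_def
    by (intro compact_uniformly_continuous continuous_intros) auto
  then obtain d where "0 < d" and d: "\<And>a b. a \<in> X \<Longrightarrow> b \<in> X \<Longrightarrow> dist a b < d \<Longrightarrow>
      \<bar>\<phi> k a / real k - \<phi> k b / real k\<bar> \<le> \<delta>"
    using \<open>0 < \<delta>\<close> unfolding uniformly_continuous_on_def dist_real_def
    by (metis dist_commute less_imp_le)
  have "\<forall>\<^sub>F eps in at_right 0.
      pressure_fun_eps X T (\<lambda>x. \<phi> k x / real k) Z eps \<le> pressure_seq_eps X T \<phi> Z eps + ereal \<delta>"
    unfolding eventually_at_right_field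
    using \<open>0 < d\<close> d assms(3-5) bound
    by (intro exI[of _ d]) (auto intro!: pressure_fun_eps_le_pressure_seq_eps)
  then have "pressure_fun X T (\<lambda>x. \<phi> k x / real k) Z
      \<le> Liminf (at_right 0) (\<lambda>eps. pressure_seq_eps X T \<phi> Z eps + ereal \<delta>)"
    unfolding pressure_fun_def by (rule Liminf_mono)
  also have "\<dots> = pressure_seq X T \<phi> Z + ereal \<delta>"
    unfolding pressure_seq_def by (rule Liminf_add_ereal_right) auto
  finally show "pressure_fun X T (\<lambda>x. \<phi> k x / real k) Z \<le> pressure_seq X T \<phi> Z + ereal \<delta>" .
qed
end
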